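(* Let $\gamma_0>-1$ and $\Theta=(-1,+\infty)\times\mathbb{R}\times(0,+\infty)$. For $B\subset\Theta$ define $\ell_B(x)=\sup_{\theta\in B}\ell_\theta(x)$, $x\in\mathbb{R}$. Let $\theta\in\Theta$ and let $B(\theta,\varepsilon)$ denote the open ball in $\Theta$ with center $\theta$ and radius $\varepsilon>0$. Then \[ \lim_{\varepsilon\to0}G_{\gamma_0}[\ell_{B(\theta,\varepsilon)}]=G_{\gamma_0}[\ell_\theta], \] where $G_{\gamma_0}[f]=\int f\,dG_{\gamma_0}$.
   Context: For $\gamma\in\mathbb{R}$, $G_\gamma$ denotes the generalized extreme value distribution with distribution function $F_\gamma(x)=\exp(-(1+\gamma x)^{-1/\gamma})$ for $1+\gamma x>0$ (interpreted as $\exp(-e^{-x})$ when $\gamma=0$). The GEV log-likelihood is $\ell_\gamma(x)=-(1+1/\gamma)\log(1+\gamma x)-(1+\gamma x)^{-1/\gamma}$ if $1+\gamma x>0$ and $-\infty$ otherwise, with $\ell_0(x)=-x-e^{-x}$; for $\theta=(\gamma,\mu,\sigma)$ with $\sigma>0$, $\ell_\theta(x)=\ell_\gamma\big(\frac{x-\mu}{\sigma}\big)-\log\sigma$. *)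

theory Defs
  imports "HOL-Analysis.Analysis"
begin

definition gev_cdf :: "real \<Rightarrow> real \<Rightarrow> real" where
  "gev_cdf g x =
     (if g = 0 then exp (- exp (- x))
      else if 1 + g * x > 0 then exp (- ((1 + g * x) powr (- 1 / g)))
      else if g > 0 then 0 else 1)"

definition GEV :: "real \<Rightarrow> real measure" where
  "GEV g = interval_measure (gev_cdf g)"

definition gev_ll :: "real \<Rightarrow> real \<Rightarrow> ereal" where
  "gev_ll g x =
     (if g = 0 then ereal (- x - exp (- x))
      else if 1 + g * x > 0 then
        ereal (- (1 + 1 / g) * ln (1 + g * x) - (1 + g * x) powr (- 1 / g))
      else - \<infinity>)"

definition ll :: "real \<times> real \<times> real \<Rightarrow> real \<Rightarrow> ereal" where
  "ll th x = (case th of (g, m, s) \<Rightarrow> gev_ll g ((x - m) / s) - ereal (ln s))"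

definition Theta :: "(real \<times> real \<times> real) set" where
  "Theta = {(g, m, s). g > -1 \<and> s > 0}"

definition llB :: "(real \<times> real \<times> real) set \<Rightarrow> real \<Rightarrow> ereal" where
  "llB B x = (SUP th\<in>B. ll th x)"

definition ereal_integral :: "real measure \<Rightarrow> (real \<Rightarrow> ereal) \<Rightarrow> ereal" where
  "ereal_integral M f =
     enn2ereal (\<integral>\<^sup>+ x. e2ennreal (f x) \<partial>M) - enn2ereal (\<integral>\<^sup>+ x. e2ennreal (- f x) \<partial>M)"

end

theory Submission
  imports Defs
begin

text \<open>As the radius e decreases to 0, the functions \<open>llB (ball \<theta> e \<inter> Theta)\<close> decrease and
  converge pointwise to \<open>ll \<theta>\<close>, because \<open>\<theta> \<mapsto> ll \<theta> x\<close> is continuous as an extended-real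
  function: with \<open>y = - ln (1 + \<gamma> z) / \<gamma>\<close> the log-likelihood is \<open>(1 + \<gamma>) y - exp y\<close>, which tends
  to \<open>-\<infinity>\<close> at the boundary of the support. The same formula bounds \<open>ll \<theta> x\<close> by
  \<open>(1 + \<gamma>)\<^sup>2 / 2 - ln \<sigma>\<close>, uniformly in x and locally uniformly in \<theta>. Monotone convergence then
  applies to the positive parts, which decrease and are dominated by a constant on the finite measure
  \<open>GEV \<gamma>\<^sub>0\<close>, and to the negative parts, which increase.\<close>

definition ln1p_quot :: "real \<Rightarrow> real" where
  "ln1p_quot t = (if t = 0 then 1 else ln (1 + t) / t)"

text \<open>On the support, \<open>(1 + g z) powr (-1/g) = exp (- gev_exponent g z)\<close>; writing the
  exponent \<open>ln (1 + g z) / g\<close> as \<open>z * ln1p_quot (g z)\<close> makes it continuous across \<open>g = 0\<close>.\<close>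
definition gev_exponent :: "real \<Rightarrow> real \<Rightarrow> real" where
  "gev_exponent g z = z * ln1p_quot (g * z)"

lemma ln_eq_gev_exponent:
  assumes "1 + g * z > 0"
  shows "ln (1 + g * z) = g * gev_exponent g z"
  using assms by (auto simp: gev_exponent_def ln1p_quot_def)

lemma gev_exponent_0 [simp]: "gev_exponent 0 z = z"
  by (simp add: gev_exponent_def ln1p_quot_def)

lemma isCont_ln1p_quot:
  assumes "t > -1"
  shows "isCont ln1p_quot t"
proof (cases "t = 0")
  case True
  have "((\<lambda>h. (ln (1 + h) - ln 1) / h) \<longlongrightarrow> 1) (at (0::real))"
    using DERIV_ln[of 1] by (simp add: DERIV_def)
  then have "(ln1p_quot \<longlongrightarrow> 1) (at 0)"
    by (rule tendsto_cong[THEN iffD1, rotated]) (auto simp: eventually_at_filter ln1p_quot_def)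
  then show ?thesis
    using True by (simp add: isCont_def ln1p_quot_def)
next
  case False
  have "isCont (\<lambda>t. ln (1 + t) / t) t"
    using False assms by (auto intro!: continuous_intros)
  moreover have "\<forall>\<^sub>F s in nhds t. ln1p_quot s = ln (1 + s) / s"
    using False by (auto simp: eventually_nhds ln1p_quot_def intro!: exI[of _ "- {0}"])
  ultimately show ?thesis
    using isCont_cong by metis
qed

lemma tendsto_gev_exponent:
  assumes "1 + g * z > 0" and "(f \<longlongrightarrow> g) F" and "(h \<longlongrightarrow> z) F"
  shows "((\<lambda>x. gev_exponent (f x) (h x)) \<longlongrightarrow> gev_exponent g z) F"
proof -
  have "isCont ln1p_quot (g * z)"
    using assms(1) by (intro isCont_ln1p_quot) auto
  then have "((\<lambda>x. ln1p_quot (f x * h x)) \<longlongrightarrow> ln1p_quot (g * z)) F"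
    by (rule isCont_tendsto_compose) (intro tendsto_mult assms(2,3))
  then show ?thesis
    unfolding gev_exponent_def by (intro tendsto_mult assms(3))
qed

lemma gev_exponent_mono:
  assumes "z \<le> z'" and "1 + g * z > 0" and "1 + g * z' > 0"
  shows "gev_exponent g z \<le> gev_exponent g z'"
proof -
  consider "g = 0" | "g > 0" | "g < 0" by linarith
  then show ?thesis
  proof cases
    case 2
    then have "ln (1 + g * z) \<le> ln (1 + g * z')"
      using assms by (simp add: mult_left_mono)
    then show ?thesis
      using 2 assms by (simp add: ln_eq_gev_exponent)
  next
    case 3
    then have "ln (1 + g * z') \<le> ln (1 + g * z)"
      using assms by (simp add: mult_left_mono_neg)
    then show ?thesis
      using 3 assms by (simp add: ln_eq_gev_exponent)
  qed (use assms in simp)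
qed

lemma gev_ll_eq_exponent:
  "gev_ll g z =
     (if 1 + g * z > 0 then ereal ((1 + g) * - gev_exponent g z - exp (- gev_exponent g z))
      else - \<infinity>)"
proof (cases "g = 0 \<or> \<not> 1 + g * z > 0")
  case False
  then have "g \<noteq> 0" and pos: "1 + g * z > 0" by auto
  have "(1 + g * z) powr (- 1 / g) = exp (- gev_exponent g z)"
    and "- (1 + 1 / g) * ln (1 + g * z) = (1 + g) * - gev_exponent g z"
    using \<open>g \<noteq> 0\<close> pos by (simp_all add: powr_def ln_eq_gev_exponent field_simps)
  then show ?thesis
    using \<open>g \<noteq> 0\<close> pos by (simp add: gev_ll_def)
qed (auto simp: gev_ll_def)

lemma gev_cdf_eq_exponent:
  "gev_cdf g x =
     (if 1 + g * x > 0 then exp (- exp (- gev_exponent g x)) else if g > 0 then 0 else 1)"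
proof (cases "g = 0 \<or> \<not> 1 + g * x > 0")
  case False
  then have "(1 + g * x) powr (- 1 / g) = exp (- gev_exponent g x)"
    by (simp add: powr_def ln_eq_gev_exponent)
  then show ?thesis
    using False by (simp add: gev_cdf_def)
qed (auto simp: gev_cdf_def)

lemma mult_minus_exp_le:
  fixes a y :: real
  assumes "a > 0"
  shows "a * y - exp y \<le> a\<^sup>2 / 2"
proof (cases "y \<le> 0")
  case True
  then have "a * y \<le> 0"
    using assms by (simp add: mult_nonneg_nonpos)
  moreover have "0 \<le> a\<^sup>2 / 2"
    by simp
  ultimately show ?thesis
    using exp_gt_zero[of y] by linarith
next
  case False
  then have "1 + y + y\<^sup>2 / 2 \<le> exp y"
    by (intro exp_lower_Taylor_quadratic) auto
  moreover have "(y - a)\<^sup>2 \<ge> 0"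
    by simp
  ultimately show ?thesis
    using False by (simp add: power2_eq_square algebra_simps)
qed

lemma filterlim_mult_minus_exp_at_bot:
  fixes a y :: "'a \<Rightarrow> real"
  assumes a: "(a \<longlongrightarrow> a0) F" "a0 > 0"
    and y: "filterlim y at_top F \<or> filterlim y at_bot F"
  shows "filterlim (\<lambda>x. a x * y x - exp (y x)) at_bot F"
  using y
proof
  assume y: "filterlim y at_top F"
  have "filterlim (\<lambda>x. (a0 + 2)\<^sup>2 / 2 + - y x) at_bot F"
    using filterlim_uminus_at_top[THEN iffD1, OF y]
    by (subst filterlim_tendsto_add_at_bot_iff[OF tendsto_const])
  moreover have "\<forall>\<^sub>F x in F. a x * y x - exp (y x) \<le> (a0 + 2)\<^sup>2 / 2 + - y x"
    using order_tendstoD(2)[OF a(1) less_add_one] filterlim_at_top[THEN iffD1, OF y, rule_format, of 0]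
  proof eventually_elim
    case (elim x)
    then have "a x * y x \<le> (a0 + 1) * y x"
      by (intro mult_right_mono) auto
    with mult_minus_exp_le[of "a0 + 2" "y x"] a(2) show ?case
      by (simp add: algebra_simps)
  qed
  ultimately show ?thesis
    by (rule filterlim_at_bot_mono)
next
  assume y: "filterlim y at_bot F"
  have "filterlim (\<lambda>x. a x * y x) at_bot F"
    by (rule filterlim_tendsto_pos_mult_at_bot[OF a y])
  then show ?thesis
    by (rule filterlim_at_bot_mono) auto
qed

lemma filterlim_gev_exponent_boundary:
  assumes f: "(f \<longlongrightarrow> g) F" and "g \<noteq> 0"
    and u: "filterlim (\<lambda>x. 1 + f x * h x) (at_right 0) F"
  shows "filterlim (\<lambda>x. - g * gev_exponent (f x) (h x)) at_top F"
proof -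
  have lim: "filterlim (\<lambda>x. g / f x * - ln (1 + f x * h x)) at_top F"
  proof (rule filterlim_tendsto_pos_mult_at_top)
    show "((\<lambda>x. g / f x) \<longlongrightarrow> g / g) F"
      using \<open>g \<noteq> 0\<close> by (intro tendsto_intros f)
    show "filterlim (\<lambda>x. - ln (1 + f x * h x)) at_top F"
      using filterlim_compose[OF ln_at_0 u] by (simp add: filterlim_uminus_at_bot)
  qed (use \<open>g \<noteq> 0\<close> in simp)
  have eq: "\<forall>\<^sub>F x in F. g / f x * - ln (1 + f x * h x) = - g * gev_exponent (f x) (h x)"
    using tendsto_imp_eventually_ne[OF f \<open>g \<noteq> 0\<close>] eventually_compose_filterlim[OF eventually_at_right_less u]
    by eventually_elim (simp add: ln_eq_gev_exponent)
  show ?thesis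
    using lim filterlim_cong[OF refl refl eq] by simp
qed

lemma tendsto_gev_ll_boundary:
  assumes "g > -1" and "g \<noteq> 0" and f: "(f \<longlongrightarrow> g) F"
    and u: "((\<lambda>x. 1 + f x * h x) \<longlongrightarrow> 0) F"
  shows "((\<lambda>x. gev_ll (f x) (h x)) \<longlongrightarrow> - \<infinity>) F"
proof -
  define P where "P x \<longleftrightarrow> 1 + f x * h x > 0" for x
  txt \<open>Outside the support \<open>gev_ll\<close> is \<open>-\<infinity>\<close> anyway, so it suffices to work on the
    restriction \<open>F'\<close> of \<open>F\<close> to the support.\<close>
  define F' where "F' = inf F (principal {x. P x})"
  define y where "y x = - gev_exponent (f x) (h x)" for x
  have fF': "(f \<longlongrightarrow> g) F'"
    unfolding F'_def by (rule tendsto_mono[OF inf_le1 f])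
  have "filterlim (\<lambda>x. 1 + f x * h x) (at_right 0) F'"
    unfolding F'_def
    by (intro tendsto_imp_filterlim_at_right tendsto_mono[OF inf_le1 u])
       (simp add: eventually_inf_principal P_def)
  then have gy: "filterlim (\<lambda>x. g * y x) at_top F'"
    using filterlim_gev_exponent_boundary[OF fF' \<open>g \<noteq> 0\<close>] unfolding y_def by simp
  have y_lim: "filterlim y at_top F' \<or> filterlim y at_bot F'"
  proof (cases "g > 0")
    case True
    then show ?thesis
      using filterlim_tendsto_pos_mult_at_top[OF tendsto_const[of "1 / g"] _ gy] by simp
  next
    case False
    with \<open>g \<noteq> 0\<close> show ?thesis
      using filterlim_tendsto_neg_mult_at_bot[OF tendsto_const[of "1 / g"] _ gy] by simp
  qed
  have "((\<lambda>x. 1 + f x) \<longlongrightarrow> 1 + g) F'"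
    by (intro tendsto_intros fF')
  then have "filterlim (\<lambda>x. (1 + f x) * y x - exp (y x)) at_bot F'"
    by (rule filterlim_mult_minus_exp_at_bot[OF _ _ y_lim]) (use \<open>g > -1\<close> in simp)
  then have "\<forall>\<^sub>F x in F. P x \<longrightarrow> (1 + f x) * y x - exp (y x) < r" for r
    unfolding F'_def filterlim_at_bot_dense eventually_inf_principal by simp
  then show ?thesis
    unfolding tendsto_MInfty
    by (auto elim!: eventually_mono simp: gev_ll_eq_exponent P_def y_def)
qed

lemma gev_ll_le:
  assumes "g > -1"
  shows "gev_ll g z \<le> ereal ((1 + g)\<^sup>2 / 2)"
  using mult_minus_exp_le[of "1 + g" "- gev_exponent g z"] assms by (simp add: gev_ll_eq_exponent)

lemma tendsto_gev_ll:
  assumes "g > -1" and f: "(f \<longlongrightarrow> g) F" and h: "(h \<longlongrightarrow> z) F"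
  shows "((\<lambda>x. gev_ll (f x) (h x)) \<longlongrightarrow> gev_ll g z) F"
proof -
  have u: "((\<lambda>x. 1 + f x * h x) \<longlongrightarrow> 1 + g * z) F"
    by (intro tendsto_intros f h)
  consider "1 + g * z > 0" | "1 + g * z < 0" | "1 + g * z = 0"
    by linarith
  then show ?thesis
  proof cases
    case 1
    have "((\<lambda>x. ereal ((1 + f x) * - gev_exponent (f x) (h x) - exp (- gev_exponent (f x) (h x))))
        \<longlongrightarrow> gev_ll g z) F"
      using 1 by (simp add: gev_ll_eq_exponent) (intro tendsto_intros f tendsto_gev_exponent[OF 1 f h])
    moreover have "\<forall>\<^sub>F x in F.
        ereal ((1 + f x) * - gev_exponent (f x) (h x) - exp (- gev_exponent (f x) (h x)))
          = gev_ll (f x) (h x)"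
      using order_tendstoD(1)[OF u 1] by eventually_elim (simp add: gev_ll_eq_exponent)
    ultimately show ?thesis
      by (rule Lim_transform_eventually)
  next
    case 2
    then show ?thesis
      using order_tendstoD(2)[OF u 2]
      by (intro tendsto_eventually) (auto elim!: eventually_mono simp: gev_ll_eq_exponent)
  next
    case 3
    then have "gev_ll g z = - \<infinity>"
      by (simp add: gev_ll_eq_exponent)
    with 3 show ?thesis
      using tendsto_gev_ll_boundary[OF \<open>g > -1\<close> _ f] u by fastforce
  qed
qed

lemma gev_cdf_bounds: "0 \<le> gev_cdf g x" "gev_cdf g x \<le> 1"
  by (auto simp: gev_cdf_eq_exponent)

lemma gev_cdf_mono:
  assumes "x \<le> x'"
  shows "gev_cdf g x \<le> gev_cdf g x'"
proof (cases "1 + g * x > 0 \<and> 1 + g * x' > 0")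
  case True
  then show ?thesis
    using gev_exponent_mono[OF assms] by (simp add: gev_cdf_eq_exponent)
next
  case False
  show ?thesis
  proof (cases g "0::real" rule: linorder_cases)
    case less
    then have "1 + g * x' \<le> 1 + g * x"
      using mult_left_mono_neg[OF assms] by simp
    then have "\<not> 1 + g * x' > 0"
      using False by (meson less_le_trans)
    then have "gev_cdf g x' = 1"
      using less by (simp add: gev_cdf_eq_exponent)
    then show ?thesis
      using gev_cdf_bounds(2) by simp
  next
    case greater
    then have "1 + g * x \<le> 1 + g * x'"
      using mult_left_mono[OF assms] by simp
    then have "\<not> 1 + g * x > 0"
      using False by (meson less_le_trans)
    then have "gev_cdf g x = 0"
      using greater by (simp add: gev_cdf_eq_exponent)
    then show ?thesis
      using gev_cdf_bounds(1) by simp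
  qed (use False in simp)
qed

lemma tendsto_gev_cdf_boundary:
  assumes "g > 0" and "1 + g * a = 0"
  shows "(gev_cdf g \<longlongrightarrow> 0) (at_right a)"
proof -
  have pos: "\<forall>\<^sub>F x in at_right a. 1 + g * x > 0"
    using eventually_at_right_less[of a]
  proof eventually_elim
    case (elim x)
    have "1 + g * x = g * (x - a)"
      using assms(2) by (simp add: algebra_simps)
    with elim assms(1) show ?case
      by simp
  qed
  moreover have "((\<lambda>x. 1 + g * x) \<longlongrightarrow> 0) (at_right a)"
    using assms(2) by (intro tendsto_eq_intros) auto
  ultimately have "filterlim (\<lambda>x. 1 + g * x) (at_right 0) (at_right a)"
    by (intro tendsto_imp_filterlim_at_right)
  then have "filterlim (\<lambda>x. - g * gev_exponent g x) at_top (at_right a)"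
    using assms(1) filterlim_gev_exponent_boundary[of "\<lambda>_. g" g _ "\<lambda>x. x"] by auto
  then have "filterlim (\<lambda>x. 1 / g * (- g * gev_exponent g x)) at_top (at_right a)"
    by (rule filterlim_tendsto_pos_mult_at_top[OF tendsto_const, rotated]) (use assms(1) in simp)
  then have "filterlim (\<lambda>x. - gev_exponent g x) at_top (at_right a)"
    using assms(1) by simp
  then have "((\<lambda>x. exp (- exp (- gev_exponent g x))) \<longlongrightarrow> 0) (at_right a)"
    by (intro filterlim_compose[OF exp_at_bot] filterlim_compose[OF filterlim_uminus_at_bot_at_top]
        filterlim_compose[OF exp_at_top])
  moreover have "\<forall>\<^sub>F x in at_right a. exp (- exp (- gev_exponent g x)) = gev_cdf g x"
    using pos by eventually_elim (simp add: gev_cdf_eq_exponent)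
  ultimately show ?thesis
    by (rule Lim_transform_eventually)
qed

lemma gev_cdf_continuous_at_right: "continuous (at_right a) (gev_cdf g)"
  unfolding continuous_within
proof -
  have u: "((\<lambda>x. 1 + g * x) \<longlongrightarrow> 1 + g * a) (at_right a)"
    by (intro tendsto_intros)
  consider "1 + g * a > 0" | "1 + g * a < 0" | "1 + g * a = 0" "g < 0" | "1 + g * a = 0" "g > 0"
    by (cases "1 + g * a" "0::real" rule: linorder_cases; cases g "0::real" rule: linorder_cases) auto
  then show "(gev_cdf g \<longlongrightarrow> gev_cdf g a) (at_right a)"
  proof cases
    case 1
    have "((\<lambda>x. exp (- exp (- gev_exponent g x))) \<longlongrightarrow> gev_cdf g a) (at_right a)"
      using 1 by (simp add: gev_cdf_eq_exponent) (intro tendsto_intros tendsto_gev_exponent[OF 1] tendsto_ident_at)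
    moreover have "\<forall>\<^sub>F x in at_right a. exp (- exp (- gev_exponent g x)) = gev_cdf g x"
      using order_tendstoD(1)[OF u 1] by eventually_elim (simp add: gev_cdf_eq_exponent)
    ultimately show ?thesis
      by (rule Lim_transform_eventually)
  next
    case 2
    then show ?thesis
      using order_tendstoD(2)[OF u 2]
      by (intro tendsto_eventually) (auto elim!: eventually_mono simp: gev_cdf_eq_exponent)
  next
    case 3
    have "\<forall>\<^sub>F x in at_right a. \<not> 1 + g * x > 0"
      using eventually_at_right_less[of a]
    proof eventually_elim
      case (elim x)
      have "1 + g * x = g * (x - a)"
        using 3 by (simp add: algebra_simps)
      with elim 3 show ?case
        using mult_neg_pos[of g "x - a"] by simp
    qed
    then show ?thesis
      using 3 by (intro tendsto_eventually) (auto elim!: eventually_mono simp: gev_cdf_eq_exponent)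
  next
    case 4
    then show ?thesis
      using tendsto_gev_cdf_boundary by (simp add: gev_cdf_eq_exponent)
  qed
qed

lemma emeasure_interval_measure_UNIV_le:
  fixes F :: "real \<Rightarrow> real"
  assumes mono: "\<And>x y. x \<le> y \<Longrightarrow> F x \<le> F y" and cont: "\<And>a. continuous (at_right a) F"
    and bounds: "\<And>x. c \<le> F x" "\<And>x. F x \<le> d"
  shows "emeasure (interval_measure F) UNIV \<le> ennreal (d - c)"
proof -
  have "UNIV = (\<Union>n. {- real n<..real n})"
  proof (intro set_eqI iffI UNIV_I)
    fix x :: real
    obtain n where "\<bar>x\<bar> < real n"
      using reals_Archimedean2 by blast
    then show "x \<in> (\<Union>n. {- real n<..real n})"
      by (intro UN_I[of n]) auto
  qed
  then have "emeasure (interval_measure F) UNIV = emeasure (interval_measure F) (\<Union>n. {- real n<..real n})"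
    by simp
  also have "\<dots> = (SUP n. emeasure (interval_measure F) {- real n<..real n})"
    by (rule SUP_emeasure_incseq[symmetric]) (auto simp: incseq_def)
  also have "\<dots> = (SUP n. ennreal (F (real n) - F (- real n)))"
    by (simp add: emeasure_interval_measure_Ioc mono cont)
  also have "\<dots> \<le> ennreal (d - c)"
    using bounds(1)[of "- real _"] bounds(2)[of "real _"] by (intro SUP_least ennreal_leI) (simp add: diff_mono)
  finally show ?thesis .
qed

lemma ll_eq_gev_ll: "ll th x = gev_ll (fst th) ((x - fst (snd th)) / snd (snd th)) - ereal (ln (snd (snd th)))"
  by (cases th) (simp add: ll_def)

lemma Theta_iff: "th \<in> Theta \<longleftrightarrow> fst th > -1 \<and> snd (snd th) > 0"
  by (cases th) (auto simp: Theta_def)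

lemma tendsto_ll:
  assumes "th \<in> Theta" and T: "(T \<longlongrightarrow> th) F" and X: "(X \<longlongrightarrow> x) F"
  shows "((\<lambda>i. ll (T i) (X i)) \<longlongrightarrow> ll th x) F"
proof -
  have g: "fst th > -1" and s: "snd (snd th) > 0"
    using assms(1) by (auto simp: Theta_iff)
  have "((\<lambda>i. gev_ll (fst (T i)) ((X i - fst (snd (T i))) / snd (snd (T i))))
      \<longlongrightarrow> gev_ll (fst th) ((x - fst (snd th)) / snd (snd th))) F"
    using s by (intro tendsto_gev_ll g tendsto_intros T X) auto
  moreover have "((\<lambda>i. ereal (ln (snd (snd (T i))))) \<longlongrightarrow> ereal (ln (snd (snd th)))) F"
    using s by (intro tendsto_intros T) auto
  ultimately show ?thesis
    unfolding ll_eq_gev_ll by (rule tendsto_diff_ereal_general) auto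
qed

lemma continuous_on_ll: "th \<in> Theta \<Longrightarrow> continuous_on UNIV (ll th)"
  using tendsto_ll[OF _ tendsto_const tendsto_ident_at]
  by (intro continuous_at_imp_continuous_on) (simp add: isCont_def)

lemma ll_le:
  assumes "th \<in> Theta"
  shows "ll th x \<le> ereal ((1 + fst th)\<^sup>2 / 2 - ln (snd (snd th)))"
proof -
  have "gev_ll (fst th) ((x - fst (snd th)) / snd (snd th)) \<le> ereal ((1 + fst th)\<^sup>2 / 2)"
    using assms by (intro gev_ll_le) (auto simp: Theta_iff)
  then show ?thesis
    unfolding ll_eq_gev_ll by (cases "gev_ll (fst th) ((x - fst (snd th)) / snd (snd th))") auto
qed

lemma llB_ball_bounded:
  assumes "th \<in> Theta"
  obtains e C where "e > 0" "\<And>x. llB (ball th e \<inter> Theta) x \<le> ereal C"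
proof
  define e where "e = min 1 (snd (snd th) / 2)"
  show "e > 0"
    using assms by (auto simp: e_def Theta_iff)
  fix x
  show "llB (ball th e \<inter> Theta) x \<le> ereal ((2 + fst th)\<^sup>2 / 2 - ln (snd (snd th) / 2))"
    unfolding llB_def
  proof (rule SUP_least)
    fix t
    assume t: "t \<in> ball th e \<inter> Theta"
    then have "dist (fst th) (fst t) < e" "dist (snd (snd th)) (snd (snd t)) < e"
      using dist_fst_le[of th t] dist_snd_le[of th t] dist_snd_le[of "snd th" "snd t"] by auto
    then have "fst t < fst th + 1" "snd (snd t) > snd (snd th) / 2"
      unfolding e_def dist_real_def abs_diff_less_iff by auto
    moreover have "fst t > -1" "snd (snd th) > 0"
      using t assms by (auto simp: Theta_iff)
    ultimately have "(1 + fst t)\<^sup>2 / 2 - ln (snd (snd t)) \<le> (2 + fst th)\<^sup>2 / 2 - ln (snd (snd th) / 2)"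
      by (intro diff_mono divide_right_mono power_mono) auto
    then show "ll t x \<le> ereal ((2 + fst th)\<^sup>2 / 2 - ln (snd (snd th) / 2))"
      using ll_le[of t x] t by (auto intro: order_trans)
  qed
qed

lemma tendsto_SUP_ball_at_right:
  fixes f :: "'a::metric_space \<Rightarrow> 'b::{complete_linorder, linear_continuum_topology}"
  assumes "a \<in> A" and "continuous (at a within A) f"
  shows "((\<lambda>e. SUP t\<in>ball a e \<inter> A. f t) \<longlongrightarrow> f a) (at_right 0)"
proof (rule order_tendstoI)
  fix b
  assume "b < f a"
  show "\<forall>\<^sub>F e in at_right 0. b < (SUP t\<in>ball a e \<inter> A. f t)"
    using eventually_at_right_less[of 0]
  proof eventually_elim
    case (elim e)
    then have "f a \<le> (SUP t\<in>ball a e \<inter> A. f t)"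
      using \<open>a \<in> A\<close> by (intro SUP_upper) auto
    with \<open>b < f a\<close> show ?case
      by order
  qed
next
  fix b
  assume "f a < b"
  then obtain b' where b': "f a < b'" "b' < b"
    using dense by blast
  then obtain d where "d > 0" and d: "\<And>t. t \<in> A \<Longrightarrow> dist t a < d \<Longrightarrow> f t < b'"
    using assms(2) order_tendstoD(2)[of f "f a" "at a within A" b'] b'
    unfolding continuous_within eventually_at by (metis dist_eq_0_iff)
  have "\<forall>\<^sub>F e in at_right 0. e < d"
    using \<open>d > 0\<close> by (intro eventually_at_rightI[of 0 d]) auto
  then show "\<forall>\<^sub>F e in at_right 0. (SUP t\<in>ball a e \<inter> A. f t) < b"
  proof eventually_elim
    case (elim e)
    have "(SUP t\<in>ball a e \<inter> A. f t) \<le> b'"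
      using elim by (intro SUP_least less_imp_le d) (auto simp: dist_commute)
    with b' show ?case
      by simp
  qed
qed

lemma borel_measurable_SUP_continuous:
  fixes f :: "'i \<Rightarrow> 'a::topological_space \<Rightarrow> 'b::{complete_linorder, linorder_topology, second_countable_topology}"
  assumes "\<And>i. i \<in> I \<Longrightarrow> continuous_on UNIV (f i)"
  shows "(\<lambda>x. SUP i\<in>I. f i x) \<in> borel_measurable borel"
proof (rule borel_measurableI_greater)
  fix y
  have "{x. y < (SUP i\<in>I. f i x)} = (\<Union>i\<in>I. {x. y < f i x})"
    by (auto simp: less_SUP_iff)
  also have "open \<dots>"
    using assms by (intro open_UN ballI open_Collect_less continuous_on_const) auto
  finally show "{x \<in> space borel. y < (SUP i\<in>I. f i x)} \<in> sets borel"
    by simp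
qed

lemma tendsto_nn_integral_at_right_decreasing:
  fixes u :: "real \<Rightarrow> 'a \<Rightarrow> ennreal"
  assumes meas: "\<And>e. 0 < e \<Longrightarrow> u e \<in> borel_measurable M"
    and mono: "\<And>e e' x. 0 < e \<Longrightarrow> e \<le> e' \<Longrightarrow> u e x \<le> u e' x"
    and lim: "\<And>x. x \<in> space M \<Longrightarrow> ((\<lambda>e. u e x) \<longlongrightarrow> v x) (at_right 0)"
    and fin: "0 < e0" "(\<integral>\<^sup>+ x. u e0 x \<partial>M) < \<infinity>"
  shows "((\<lambda>e. \<integral>\<^sup>+ x. u e x \<partial>M) \<longlongrightarrow> (\<integral>\<^sup>+ x. v x \<partial>M)) (at_right 0)"
proof (rule tendsto_at_right_sequentially[OF \<open>0 < e0\<close>])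
  fix S :: "nat \<Rightarrow> real"
  assume S: "\<And>n. 0 < S n" "\<And>n. S n < e0" "decseq S" "S \<longlonglongrightarrow> 0"
  have dec: "decseq (\<lambda>n. u (S n))"
    using S(1,3) by (auto intro!: antimonoI le_funI mono dest: decseqD)
  have "(\<integral>\<^sup>+ x. u (S 0) x \<partial>M) \<le> (\<integral>\<^sup>+ x. u e0 x \<partial>M)"
    by (intro nn_integral_mono mono[OF S(1) less_imp_le[OF S(2)]])
  then have "(\<integral>\<^sup>+ x. u (S 0) x \<partial>M) < \<infinity>"
    using fin(2) by (rule le_less_trans)
  then have "(\<integral>\<^sup>+ x. (INF n. u (S n) x) \<partial>M) = (INF n. \<integral>\<^sup>+ x. u (S n) x \<partial>M)"
    using dec S(1) meas by (intro nn_integral_monotone_convergence_INF_decseq) auto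
  moreover have "(\<integral>\<^sup>+ x. (INF n. u (S n) x) \<partial>M) = (\<integral>\<^sup>+ x. v x \<partial>M)"
  proof (rule nn_integral_cong)
    fix x
    assume "x \<in> space M"
    have "filterlim S (at_right 0) sequentially"
      using S by (intro tendsto_imp_filterlim_at_right) auto
    then have "(\<lambda>n. u (S n) x) \<longlonglongrightarrow> v x"
      by (rule filterlim_compose[OF lim[OF \<open>x \<in> space M\<close>]])
    then show "(INF n. u (S n) x) = v x"
      using dec by (intro INF_Lim) (auto simp: monotone_on_def le_fun_def)
  qed
  moreover have "(\<lambda>n. \<integral>\<^sup>+ x. u (S n) x \<partial>M) \<longlonglongrightarrow> (INF n. \<integral>\<^sup>+ x. u (S n) x \<partial>M)"
    using dec by (intro LIMSEQ_INF) (auto simp: monotone_on_def le_fun_def intro: nn_integral_mono)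
  ultimately show "(\<lambda>n. \<integral>\<^sup>+ x. u (S n) x \<partial>M) \<longlonglongrightarrow> (\<integral>\<^sup>+ x. v x \<partial>M)"
    by simp
qed

lemma tendsto_nn_integral_at_right_increasing:
  fixes u :: "real \<Rightarrow> 'a \<Rightarrow> ennreal"
  assumes meas: "\<And>e. 0 < e \<Longrightarrow> u e \<in> borel_measurable M"
    and mono: "\<And>e e' x. 0 < e \<Longrightarrow> e \<le> e' \<Longrightarrow> u e' x \<le> u e x"
    and lim: "\<And>x. x \<in> space M \<Longrightarrow> ((\<lambda>e. u e x) \<longlongrightarrow> v x) (at_right 0)"
  shows "((\<lambda>e. \<integral>\<^sup>+ x. u e x \<partial>M) \<longlongrightarrow> (\<integral>\<^sup>+ x. v x \<partial>M)) (at_right 0)"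
proof (rule tendsto_at_right_sequentially[OF zero_less_one])
  fix S :: "nat \<Rightarrow> real"
  assume S: "\<And>n. 0 < S n" "\<And>n. S n < 1" "decseq S" "S \<longlonglongrightarrow> 0"
  have inc: "incseq (\<lambda>n. u (S n))"
    using S(1,3) by (auto intro!: monoI le_funI mono dest: decseqD)
  have "(\<integral>\<^sup>+ x. (SUP n. u (S n) x) \<partial>M) = (SUP n. \<integral>\<^sup>+ x. u (S n) x \<partial>M)"
    using inc S(1) meas by (intro nn_integral_monotone_convergence_SUP) auto
  moreover have "(\<integral>\<^sup>+ x. (SUP n. u (S n) x) \<partial>M) = (\<integral>\<^sup>+ x. v x \<partial>M)"
  proof (rule nn_integral_cong)
    fix x
    assume "x \<in> space M"
    have "filterlim S (at_right 0) sequentially"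
      using S by (intro tendsto_imp_filterlim_at_right) auto
    then have "(\<lambda>n. u (S n) x) \<longlonglongrightarrow> v x"
      by (rule filterlim_compose[OF lim[OF \<open>x \<in> space M\<close>]])
    then show "(SUP n. u (S n) x) = v x"
      using inc by (intro SUP_Lim) (auto simp: monotone_on_def le_fun_def)
  qed
  moreover have "(\<lambda>n. \<integral>\<^sup>+ x. u (S n) x \<partial>M) \<longlonglongrightarrow> (SUP n. \<integral>\<^sup>+ x. u (S n) x \<partial>M)"
    using inc by (intro LIMSEQ_SUP) (auto simp: monotone_on_def le_fun_def intro: nn_integral_mono)
  ultimately show "(\<lambda>n. \<integral>\<^sup>+ x. u (S n) x \<partial>M) \<longlonglongrightarrow> (\<integral>\<^sup>+ x. v x \<partial>M)"
    by simp
qed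

lemma tendsto_ereal_integral_at_right:
  fixes f :: "real \<Rightarrow> real \<Rightarrow> ereal"
  assumes fin: "emeasure M (space M) \<noteq> \<infinity>"
    and meas: "\<And>e. 0 < e \<Longrightarrow> f e \<in> borel_measurable M"
    and mono: "\<And>e e' x. 0 < e \<Longrightarrow> e \<le> e' \<Longrightarrow> f e x \<le> f e' x"
    and bdd: "0 < e0" "\<And>x. f e0 x \<le> ereal C"
    and lim: "\<And>x. x \<in> space M \<Longrightarrow> ((\<lambda>e. f e x) \<longlongrightarrow> l x) (at_right 0)"
  shows "((\<lambda>e. ereal_integral M (f e)) \<longlongrightarrow> ereal_integral M l) (at_right 0)"
proof -
  have "(\<integral>\<^sup>+ x. e2ennreal (f e0 x) \<partial>M) \<le> (\<integral>\<^sup>+ x. ennreal C \<partial>M)"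
    using bdd(2) e2ennreal_mono by (intro nn_integral_mono) fastforce
  also have "\<dots> < \<infinity>"
    using fin by (simp add: ennreal_mult_less_top less_top)
  finally have fin_pos: "(\<integral>\<^sup>+ x. e2ennreal (f e0 x) \<partial>M) < \<infinity>" .
  have pos: "((\<lambda>e. \<integral>\<^sup>+ x. e2ennreal (f e x) \<partial>M) \<longlongrightarrow> (\<integral>\<^sup>+ x. e2ennreal (l x) \<partial>M)) (at_right 0)"
  proof (rule tendsto_nn_integral_at_right_decreasing[where u = "\<lambda>e x. e2ennreal (f e x)", OF _ _ _ bdd(1) fin_pos])
    show "(\<lambda>x. e2ennreal (f e x)) \<in> borel_measurable M" if "0 < e" for e
      using meas[OF that] by measurable
    show "e2ennreal (f e x) \<le> e2ennreal (f e' x)" if "0 < e" "e \<le> e'" for e e' x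
      using mono[OF that] by (rule e2ennreal_mono)
    show "((\<lambda>e. e2ennreal (f e x)) \<longlongrightarrow> e2ennreal (l x)) (at_right 0)" if "x \<in> space M" for x
      by (intro tendsto_e2ennrealI lim that)
  qed
  have neg: "((\<lambda>e. \<integral>\<^sup>+ x. e2ennreal (- f e x) \<partial>M) \<longlongrightarrow> (\<integral>\<^sup>+ x. e2ennreal (- l x) \<partial>M)) (at_right 0)"
  proof (rule tendsto_nn_integral_at_right_increasing[where u = "\<lambda>e x. e2ennreal (- f e x)"])
    show "(\<lambda>x. e2ennreal (- f e x)) \<in> borel_measurable M" if "0 < e" for e
      using meas[OF that] by measurable
    show "e2ennreal (- f e' x) \<le> e2ennreal (- f e x)" if "0 < e" "e \<le> e'" for e e' x
      using mono[OF that] by (intro e2ennreal_mono) simp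
    show "((\<lambda>e. e2ennreal (- f e x)) \<longlongrightarrow> e2ennreal (- l x)) (at_right 0)" if "x \<in> space M" for x
      by (intro tendsto_e2ennrealI tendsto_uminus_ereal lim that)
  qed
  have "l x \<le> f e0 x" if "x \<in> space M" for x
  proof (rule tendsto_upperbound[OF lim[OF that]])
    show "\<forall>\<^sub>F e in at_right 0. f e x \<le> f e0 x"
      using \<open>0 < e0\<close> mono by (intro eventually_at_rightI[of 0 e0]) simp_all
  qed simp
  then have "(\<integral>\<^sup>+ x. e2ennreal (l x) \<partial>M) < \<infinity>"
    by (intro le_less_trans[OF nn_integral_mono fin_pos] e2ennreal_mono)
  then show ?thesis
    unfolding ereal_integral_def
    by (intro tendsto_diff_ereal_general tendsto_enn2erealI pos neg) (auto simp: less_top)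
qed

lemma emeasure_GEV_finite: "emeasure (GEV g) (space (GEV g)) \<noteq> \<infinity>"
  using emeasure_interval_measure_UNIV_le[of "gev_cdf g" 0 1]
  by (auto simp: GEV_def gev_cdf_mono gev_cdf_continuous_at_right gev_cdf_bounds top_unique)

lemma llB_measurable:
  assumes "B \<subseteq> Theta"
  shows "llB B \<in> borel_measurable (GEV g)"
  unfolding llB_def GEV_def measurable_cong_sets[OF sets_interval_measure refl]
  using assms by (intro borel_measurable_SUP_continuous continuous_on_ll) auto

lemma llB_mono: "B \<subseteq> B' \<Longrightarrow> llB B x \<le> llB B' x"
  unfolding llB_def by (rule SUP_subset_mono) auto

lemma tendsto_llB_ball:
  assumes "th \<in> Theta"
  shows "((\<lambda>e. llB (ball th e \<inter> Theta) x) \<longlongrightarrow> ll th x) (at_right 0)"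
  unfolding llB_def
proof (rule tendsto_SUP_ball_at_right[OF assms])
  show "continuous (at th within Theta) (\<lambda>t. ll t x)"
    using tendsto_ll[OF assms tendsto_ident_at tendsto_const]
    by (simp add: continuous_within tendsto_within_subset)
qed

theorem lemma3p2:
  fixes g0 :: real and th :: "real \<times> real \<times> real"
  assumes "g0 > -1" and "th \<in> Theta"
  shows "((\<lambda>e. ereal_integral (GEV g0) (llB (ball th e \<inter> Theta)))
           \<longlongrightarrow> ereal_integral (GEV g0) (ll th)) (at_right 0)"
proof -
  obtain e0 C where "e0 > 0" and "\<And>x. llB (ball th e0 \<inter> Theta) x \<le> ereal C"
    using llB_ball_bounded[OF \<open>th \<in> Theta\<close>] by blast
  then show ?thesis
    using emeasure_GEV_finite tendsto_llB_ball[OF \<open>th \<in> Theta\<close>]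
    by (intro tendsto_ereal_integral_at_right llB_measurable llB_mono subset_ball) auto
qed

end
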